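(* Let $p\in(0,1)$ be constant, $b=1/(1-p)$, and let $a=a(n)$ be an integer satisfying $1.01\log_b n\le a\le 100\log_b n$ and $\mu\le n^{1.99}$, where $\mu=\mu_a(n)=\binom{n}{a}(1-p)^{\binom a2}$. Then there is a coupling of $G_n=G_{n,p}$ and $G_{n-a}=G_{n-a,p}$ such that \[ \Pr\big(\chi(G_n)\le\chi(G_{n-a})+1\big)\ge 1-\frac{1+o(1)}{2\sqrt{\mu}}, \] where $o(1)$ denotes a quantity tending to $0$ as $n\to\infty$.
   Context: $G_{n,p}$ is the binomial random graph on $n$ labelled vertices with edge probability $p$; $\chi$ denotes chromatic number. A coupling is a joint probability space carrying both random graphs with their correct marginal distributions. *)

theory Defs
  imports "HOL-Probability.Probability"
begin

text \<open>Graphs on the labelled vertex set {0..<n} are represented by their edge sets: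
  sets of two-element subsets {i,j} of {0..<n}.\<close>

definition all_pairs :: "nat \<Rightarrow> nat set set" where
  "all_pairs n = {{i, j} | i j. i < j \<and> j < n}"

definition gnp :: "nat \<Rightarrow> real \<Rightarrow> nat set set pmf" where
  "gnp n p = map_pmf (\<lambda>f. {e \<in> all_pairs n. f e})
              (Pi_pmf (all_pairs n) False (\<lambda>_. bernoulli_pmf p))"

definition proper_colouring :: "nat \<Rightarrow> nat set set \<Rightarrow> nat \<Rightarrow> (nat \<Rightarrow> nat) \<Rightarrow> bool" where
  "proper_colouring n E k c \<longleftrightarrow>
     (\<forall>v<n. c v < k) \<and> (\<forall>u v. {u, v} \<in> E \<and> u \<noteq> v \<longrightarrow> c u \<noteq> c v)"

definition chromatic_number :: "nat \<Rightarrow> nat set set \<Rightarrow> nat" where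
  "chromatic_number n E = (LEAST k. \<exists>c. proper_colouring n E k c)"

definition is_coupling :: "('a \<times> 'b) pmf \<Rightarrow> 'a pmf \<Rightarrow> 'b pmf \<Rightarrow> bool" where
  "is_coupling q P Q \<longleftrightarrow> map_pmf fst q = P \<and> map_pmf snd q = Q"

end

theory Submission
  imports Defs "HOL-Real_Asymp.Real_Asymp"
begin

text \<open>Plant a uniformly random a-set S as an independent set in G(n,p) and couple the resulting
  graph G' with G(n-a,p) by deleting S and relabelling: colouring S with one extra colour gives
  \<open>\<chi>(G') \<le> \<chi>(G(n-a,p)) + 1\<close>. The law of G' has density \<open>Y = X / \<mu>\<close> with respect to G(n,p),
  X being the number of independent a-sets, so G(n,p) and G' can be coupled to coincide with
  probability \<open>\<Sum> min(P, P Y) \<ge> 1 - sqrt(E[Y\<^sup>2] - 1) / 2\<close> (Cauchy-Schwarz); gluing the two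
  couplings along G' couples G(n,p) with G(n-a,p). The second moment method gives
  \<open>E[Y\<^sup>2] - 1 \<le> (1 + \<Sigma>) / \<mu>\<close>, where \<Sigma> sums the contributions of pairs of a-sets
  meeting in \<open>2 \<le> i < a\<close> vertices; under the hypotheses on a and \<mu> this sum tends to 0,
  estimating the terms separately for \<open>i \<le> 50\<close>, for \<open>50 \<le> i \<le> 1.9 log\<^sub>b n\<close> and for larger i.\<close>

section \<open>Couplings of finite distributions\<close>

lemma pmf_map_fst_eq_sum:
  assumes "finite Y" "set_pmf q \<subseteq> UNIV \<times> Y"
  shows "pmf (map_pmf fst q) x = (\<Sum>y\<in>Y. pmf q (x, y))"
proof -
  have "pmf (map_pmf fst q) x = measure_pmf.prob q (fst -` {x})"
    by (simp add: pmf_map)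
  also have "\<dots> = measure_pmf.prob q ({x} \<times> Y)"
    using assms(2) by (intro measure_eq_AE AE_pmfI) auto
  also have "\<dots> = (\<Sum>y\<in>Y. pmf q (x, y))"
    using assms(1) by (simp add: measure_measure_pmf_finite sum.cartesian_product')
  finally show ?thesis .
qed

lemma pmf_map_snd_eq_sum:
  assumes "finite X" "set_pmf q \<subseteq> X \<times> UNIV"
  shows "pmf (map_pmf snd q) y = (\<Sum>x\<in>X. pmf q (x, y))"
proof -
  have "pmf (map_pmf snd q) y = measure_pmf.prob q (snd -` {y})"
    by (simp add: pmf_map)
  also have "\<dots> = measure_pmf.prob q (X \<times> {y})"
    using assms(2) by (intro measure_eq_AE AE_pmfI) auto
  also have "\<dots> = (\<Sum>x\<in>X. pmf q (x, y))"
    using assms(1) by (simp add: measure_measure_pmf_finite sum.cartesian_product')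
  finally show ?thesis .
qed

lemma map_pmf_fst_eqI:
  assumes "finite Y" "set_pmf q \<subseteq> X \<times> Y" "set_pmf P \<subseteq> X"
    and "\<And>x. x \<in> X \<Longrightarrow> (\<Sum>y\<in>Y. pmf q (x, y)) = pmf P x"
  shows "map_pmf fst q = P"
proof (rule pmf_eqI)
  fix x
  show "pmf (map_pmf fst q) x = pmf P x"
  proof (cases "x \<in> X")
    case True
    with assms show ?thesis
      by (subst pmf_map_fst_eq_sum[OF assms(1)]) auto
  next
    case False
    with assms(2,3) have "x \<notin> set_pmf P" "x \<notin> set_pmf (map_pmf fst q)"
      by auto
    then show ?thesis
      by (metis pmf_eq_0_set_pmf)
  qed
qed

lemma map_pmf_snd_eqI:
  assumes "finite X" "set_pmf q \<subseteq> X \<times> Y" "set_pmf Q \<subseteq> Y"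
    and "\<And>y. y \<in> Y \<Longrightarrow> (\<Sum>x\<in>X. pmf q (x, y)) = pmf Q y"
  shows "map_pmf snd q = Q"
proof (rule pmf_eqI)
  fix y
  show "pmf (map_pmf snd q) y = pmf Q y"
  proof (cases "y \<in> Y")
    case True
    with assms show ?thesis
      by (subst pmf_map_snd_eq_sum[OF assms(1)]) auto
  next
    case False
    with assms(2,3) have "y \<notin> set_pmf Q" "y \<notin> set_pmf (map_pmf snd q)"
      by auto
    then show ?thesis
      by (metis pmf_eq_0_set_pmf)
  qed
qed

lemma exists_coupling_with_pmf:
  assumes X: "finite X" "set_pmf P \<subseteq> X" and Y: "finite Y" "set_pmf Q \<subseteq> Y"
    and f_nonneg: "\<And>z. 0 \<le> f z" and f_outside: "\<And>z. z \<notin> X \<times> Y \<Longrightarrow> f z = 0"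
    and row_sums: "\<And>x. x \<in> X \<Longrightarrow> (\<Sum>y\<in>Y. f (x, y)) = pmf P x"
    and column_sums: "\<And>y. y \<in> Y \<Longrightarrow> (\<Sum>x\<in>X. f (x, y)) = pmf Q y"
  shows "\<exists>q. is_coupling q P Q \<and> (\<forall>z. pmf q z = f z)"
proof -
  have "(\<Sum>z\<in>X \<times> Y. f z) = 1"
    using X by (simp add: sum.cartesian_product' row_sums sum_pmf_eq_1)
  then have "(\<integral>\<^sup>+ z. ennreal (f z) \<partial>count_space UNIV) = 1"
    using X Y f_nonneg f_outside by (subst nn_integral_count_space'[of "X \<times> Y"]) auto
  then have pmf_q: "pmf (embed_pmf f) z = f z" for z
    using f_nonneg by (simp add: pmf_embed_pmf)
  have set_q: "set_pmf (embed_pmf f) \<subseteq> X \<times> Y"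
    using pmf_q f_outside by (metis set_pmf_iff subsetI)
  have "is_coupling (embed_pmf f) P Q"
    unfolding is_coupling_def
    using map_pmf_fst_eqI[OF Y(1) set_q X(2)] map_pmf_snd_eqI[OF X(1) set_q Y(2)]
    by (simp add: pmf_q row_sums column_sums)
  with pmf_q show ?thesis
    by blast
qed

lemma subcoupling_extends_to_coupling:
  assumes X: "finite X" "set_pmf P \<subseteq> X" and Y: "finite Y" "set_pmf Q \<subseteq> Y"
    and g_nonneg: "\<And>z. 0 \<le> g z"
    and row_sums: "\<And>x. x \<in> X \<Longrightarrow> (\<Sum>y\<in>Y. g (x, y)) \<le> pmf P x"
    and column_sums: "\<And>y. y \<in> Y \<Longrightarrow> (\<Sum>x\<in>X. g (x, y)) \<le> pmf Q y"
  shows "\<exists>q. is_coupling q P Q \<and> (\<forall>z\<in>X \<times> Y. g z \<le> pmf q z)"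
proof -
  define rP where "rP x = pmf P x - (\<Sum>y\<in>Y. g (x, y))" for x
  define rQ where "rQ y = pmf Q y - (\<Sum>x\<in>X. g (x, y))" for y
  define \<delta> where "\<delta> = 1 - (\<Sum>z\<in>X \<times> Y. g z)"
  \<comment> \<open>the missing mass is distributed as the product of the two marginal deficits\<close>
  define f where "f z = (if z \<in> X \<times> Y then g z + rP (fst z) * rQ (snd z) / \<delta> else 0)" for z
  have rP_nonneg: "x \<in> X \<Longrightarrow> 0 \<le> rP x" and rQ_nonneg: "y \<in> Y \<Longrightarrow> 0 \<le> rQ y" for x y
    using row_sums column_sums by (simp_all add: rP_def rQ_def)
  have sum_rP: "(\<Sum>x\<in>X. rP x) = \<delta>"
    using X by (simp add: rP_def \<delta>_def sum_subtractf sum_pmf_eq_1 sum.cartesian_product')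
  have sum_rQ: "(\<Sum>y\<in>Y. rQ y) = \<delta>"
    using Y by (simp add: rQ_def \<delta>_def sum_subtractf sum_pmf_eq_1 sum.cartesian_product' sum.swap[of _ X])
  have rP_cancel: "rP x * \<delta> / \<delta> = rP x" if "x \<in> X" for x
    using sum_rP rP_nonneg that X(1) by (cases "\<delta> = 0") (auto simp: sum_nonneg_eq_0_iff)
  have rQ_cancel: "\<delta> * rQ y / \<delta> = rQ y" if "y \<in> Y" for y
    using sum_rQ rQ_nonneg that Y(1) by (cases "\<delta> = 0") (auto simp: sum_nonneg_eq_0_iff)
  have "0 \<le> \<delta>"
    using sum_rP rP_nonneg by (metis sum_nonneg)
  have "\<exists>q. is_coupling q P Q \<and> (\<forall>z. pmf q z = f z)"
  proof (rule exists_coupling_with_pmf[OF X Y])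
    show "0 \<le> f z" for z
      using g_nonneg rP_nonneg rQ_nonneg \<open>0 \<le> \<delta>\<close> by (auto simp: f_def)
    show "(\<Sum>y\<in>Y. f (x, y)) = pmf P x" if "x \<in> X" for x
      using that rP_cancel[OF that]
      by (simp add: f_def sum.distrib sum_rQ rP_def flip: sum_divide_distrib sum_distrib_left)
    show "(\<Sum>x\<in>X. f (x, y)) = pmf Q y" if "y \<in> Y" for y
      using that rQ_cancel[OF that]
      by (simp add: f_def sum.distrib sum_rP rQ_def flip: sum_divide_distrib sum_distrib_right)
  qed (simp add: f_def)
  moreover have "g z \<le> f z" if "z \<in> X \<times> Y" for z
    using that rP_nonneg rQ_nonneg \<open>0 \<le> \<delta>\<close> by (auto simp: f_def)
  ultimately show ?thesis
    by metis
qed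

lemma exists_subcoupling_with_row_sums:
  assumes coupling: "is_coupling q' P' Q"
    and X: "finite X" "set_pmf P' \<subseteq> X" and Y: "finite Y" "set_pmf Q \<subseteq> Y"
    and c: "\<And>x. 0 \<le> c x" "\<And>x. c x \<le> pmf P' x"
  shows "\<exists>g. (\<forall>z. 0 \<le> g z \<and> g z \<le> pmf q' z) \<and> (\<forall>x. (\<Sum>y\<in>Y. g (x, y)) = c x) \<and>
    (\<forall>y. (\<Sum>x\<in>X. g (x, y)) \<le> pmf Q y)"
proof (intro exI conjI allI)
  define g where "g z = pmf q' z * c (fst z) / pmf P' (fst z)" for z
  \<comment> \<open>where \<open>pmf P' x = 0\<close>, both the division and \<open>pmf q' (x, y)\<close> give 0\<close>
  have marg: "map_pmf fst q' = P'" "map_pmf snd q' = Q"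
    using coupling by (auto simp: is_coupling_def)
  have set_q': "set_pmf q' \<subseteq> X \<times> Y"
  proof
    fix z
    assume "z \<in> set_pmf q'"
    then have "fst z \<in> set_pmf P'" "snd z \<in> set_pmf Q"
      by (auto simp flip: marg)
    then show "z \<in> X \<times> Y"
      using X(2) Y(2) by (auto simp: mem_Times_iff)
  qed
  show "0 \<le> g z" for z
    using c by (simp add: g_def)
  show g_le: "g z \<le> pmf q' z" for z
  proof (cases "pmf P' (fst z) = 0")
    case False
    then have "c (fst z) / pmf P' (fst z) \<le> 1"
      using c by (simp add: divide_le_eq_1 order_less_le)
    then show ?thesis
      unfolding g_def times_divide_eq_right[symmetric] by (intro mult_left_le) simp_all
  qed (simp add: g_def)
  have "pmf P' x = (\<Sum>y\<in>Y. pmf q' (x, y))" for x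
    using pmf_map_fst_eq_sum[OF Y(1), of q' x] set_q' by (auto simp: marg)
  then show "(\<Sum>y\<in>Y. g (x, y)) = c x" for x
    using c[of x] by (cases "pmf P' x = 0") (auto simp: g_def simp flip: sum_divide_distrib sum_distrib_right)
  have "pmf Q y = (\<Sum>x\<in>X. pmf q' (x, y))" for y
    using pmf_map_snd_eq_sum[OF X(1), of q' y] set_q' by (auto simp: marg)
  then show "(\<Sum>x\<in>X. g (x, y)) \<le> pmf Q y" for y
    by (auto intro!: sum_mono g_le)
qed

lemma exists_coupling_prob_ge_overlap:
  assumes coupling: "is_coupling q' P' Q" and support: "set_pmf q' \<subseteq> E"
    and X: "finite X" "set_pmf P \<subseteq> X" "set_pmf P' \<subseteq> X"
    and Y: "finite Y" "set_pmf Q \<subseteq> Y"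
  shows "\<exists>q. is_coupling q P Q \<and> (\<Sum>x\<in>X. min (pmf P x) (pmf P' x)) \<le> measure_pmf.prob q E"
proof -
  define c where "c x = min (pmf P x) (pmf P' x)" for x
  obtain g where g: "\<And>z. 0 \<le> g z" "\<And>z. g z \<le> pmf q' z" "\<And>x. (\<Sum>y\<in>Y. g (x, y)) = c x"
    "\<And>y. (\<Sum>x\<in>X. g (x, y)) \<le> pmf Q y"
    using exists_subcoupling_with_row_sums[OF coupling X(1,3) Y, of c] by (auto simp: c_def)
  obtain q where q: "is_coupling q P Q" "\<forall>z\<in>X \<times> Y. g z \<le> pmf q z"
    using subcoupling_extends_to_coupling[OF X(1,2) Y, of g] g by (auto simp: c_def)
  have "(\<Sum>x\<in>X. c x) = (\<Sum>z\<in>X \<times> Y. g z)"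
    by (simp add: sum.cartesian_product' g(3))
  also have "\<dots> = (\<Sum>z\<in>(X \<times> Y) \<inter> E. g z)"
  proof (rule sum.mono_neutral_right)
    show "\<forall>z\<in>X \<times> Y - X \<times> Y \<inter> E. g z = 0"
    proof
      fix z
      assume "z \<in> X \<times> Y - X \<times> Y \<inter> E"
      then have "pmf q' z = 0"
        using support by (auto simp: pmf_eq_0_set_pmf)
      then show "g z = 0"
        using g(1,2)[of z] by linarith
    qed
  qed (use X(1) Y(1) in auto)
  also have "\<dots> \<le> (\<Sum>z\<in>(X \<times> Y) \<inter> E. pmf q z)"
    using q(2) by (intro sum_mono) auto
  also have "\<dots> \<le> measure_pmf.prob q E"
    using X(1) Y(1) by (simp add: measure_measure_pmf_finite[symmetric] measure_pmf.finite_measure_mono)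
  finally show ?thesis
    using q(1) by (auto simp: c_def)
qed

lemma sum_min_density_ge:
  fixes w Y :: "'a \<Rightarrow> real"
  assumes "finite I" and w_nonneg: "\<And>i. i \<in> I \<Longrightarrow> 0 \<le> w i"
    and sum_w: "(\<Sum>i\<in>I. w i) = 1" and sum_wY: "(\<Sum>i\<in>I. w i * Y i) = 1"
  shows "1 - sqrt ((\<Sum>i\<in>I. w i * (Y i)\<^sup>2) - 1) / 2 \<le> (\<Sum>i\<in>I. min (w i) (w i * Y i))"
proof -
  define D where "D = (\<Sum>i\<in>I. w i * \<bar>1 - Y i\<bar>)"
  have "min (w i) (w i * Y i) = w i - w i * \<bar>1 - Y i\<bar> / 2 - w i * (1 - Y i) / 2" if "i \<in> I" for i
    using mult_left_mono[OF _ w_nonneg[OF that], of "Y i" 1] mult_left_mono[OF _ w_nonneg[OF that], of 1 "Y i"]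
    by (cases "Y i \<le> 1") (auto simp: min_def abs_if field_simps)
  then have sum_min: "(\<Sum>i\<in>I. min (w i) (w i * Y i)) = 1 - D / 2"
    using sum_w sum_wY
    by (simp add: D_def sum_subtractf right_diff_distrib flip: sum_divide_distrib)
  have "D\<^sup>2 = (\<Sum>i\<in>I. sqrt (w i) * (sqrt (w i) * \<bar>1 - Y i\<bar>))\<^sup>2"
    unfolding D_def using w_nonneg by (simp add: mult.assoc[symmetric])
  also have "\<dots> \<le> (\<Sum>i\<in>I. (sqrt (w i))\<^sup>2) * (\<Sum>i\<in>I. (sqrt (w i) * \<bar>1 - Y i\<bar>)\<^sup>2)"
    by (rule Cauchy_Schwarz_ineq_sum)
  also have "\<dots> = (\<Sum>i\<in>I. w i * (1 - Y i)\<^sup>2)"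
    using w_nonneg sum_w by (simp add: power_mult_distrib cong: sum.cong_simp)
  also have "\<dots> = (\<Sum>i\<in>I. w i - 2 * (w i * Y i) + w i * (Y i)\<^sup>2)"
    by (simp add: power2_eq_square algebra_simps)
  also have "\<dots> = (\<Sum>i\<in>I. w i * (Y i)\<^sup>2) - 1"
    using sum_w sum_wY by (simp add: sum.distrib sum_subtractf flip: sum_distrib_left)
  finally have "D \<le> sqrt ((\<Sum>i\<in>I. w i * (Y i)\<^sup>2) - 1)"
    by (rule real_le_rsqrt)
  then show ?thesis
    using sum_min by simp
qed

section \<open>Random graphs and chromatic number\<close>

lemma all_pairs_eq: "all_pairs n = {e. e \<subseteq> {..<n} \<and> card e = 2}"
proof (intro equalityI subsetI)
  fix e
  assume "e \<in> {e. e \<subseteq> {..<n} \<and> card e = 2}"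
  then obtain i j where e: "e = {i, j}" "i \<noteq> j" "i < n" "j < n"
    by (auto simp: card_2_iff)
  show "e \<in> all_pairs n"
  proof (cases "i < j")
    case True
    with e show ?thesis by (auto simp: all_pairs_def)
  next
    case False
    with e have "e = {j, i}" "j < i" by auto
    with e show ?thesis by (auto simp: all_pairs_def)
  qed
qed (auto simp: all_pairs_def)

lemma finite_all_pairs [simp]: "finite (all_pairs n)"
  by (rule finite_subset[of _ "Pow {..<n}"]) (auto simp: all_pairs_eq)

definition edge_set :: "nat \<Rightarrow> (nat set \<Rightarrow> bool) \<Rightarrow> nat set set" where
  "edge_set n f = {e \<in> all_pairs n. f e}"

text \<open>G(n,p) conditioned on having no edge in D.\<close>
definition gnp_avoiding :: "nat \<Rightarrow> real \<Rightarrow> nat set set \<Rightarrow> nat set set pmf" where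
  "gnp_avoiding n p D =
     map_pmf (edge_set n) (Pi_pmf (all_pairs n - D) False (\<lambda>_. bernoulli_pmf p))"

lemma gnp_eq_edge_set: "gnp n p = map_pmf (edge_set n) (Pi_pmf (all_pairs n) False (\<lambda>_. bernoulli_pmf p))"
  unfolding gnp_def edge_set_def by simp

lemma gnp_eq_gnp_avoiding_empty: "gnp n p = gnp_avoiding n p {}"
  by (simp add: gnp_eq_edge_set gnp_avoiding_def)

lemma set_pmf_gnp_avoiding: "set_pmf (gnp_avoiding n p D) \<subseteq> Pow (all_pairs n)"
  by (auto simp: gnp_avoiding_def edge_set_def)

lemma set_pmf_gnp: "set_pmf (gnp n p) \<subseteq> Pow (all_pairs n)"
  by (simp add: gnp_eq_gnp_avoiding_empty set_pmf_gnp_avoiding)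

lemma pmf_edge_set_Pi_bernoulli:
  assumes B: "B \<subseteq> all_pairs n" and p: "0 \<le> p" "p \<le> 1"
  shows "pmf (map_pmf (edge_set n) (Pi_pmf B False (\<lambda>_. bernoulli_pmf p))) G =
     (if G \<subseteq> B then p ^ card G * (1 - p) ^ (card B - card G) else 0)"
proof -
  let ?M = "Pi_pmf B False (\<lambda>_. bernoulli_pmf p)"
  have "finite B"
    using B by (rule finite_subset) simp
  have edge_set_eq: "edge_set n f = {e. f e}" if "f \<in> set_pmf ?M" for f
    using set_Pi_pmf_subset[OF \<open>finite B\<close>, of False "\<lambda>_. bernoulli_pmf p"] that B
    by (auto simp: edge_set_def)
  show ?thesis
  proof (cases "G \<subseteq> B")
    case True
    have "edge_set n -` {G} \<inter> set_pmf ?M = {\<lambda>e. e \<in> G} \<inter> set_pmf ?M"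
      using edge_set_eq by auto
    then have "pmf (map_pmf (edge_set n) ?M) G = pmf ?M (\<lambda>e. e \<in> G)"
      by (metis measure_Int_set_pmf measure_pmf_single pmf_map)
    also have "\<dots> = (\<Prod>e\<in>B. if e \<in> G then p else 1 - p)"
      using True \<open>finite B\<close> p by (subst pmf_Pi') (auto intro!: prod.cong)
    also have "\<dots> = p ^ card G * (1 - p) ^ (card B - card G)"
      using True \<open>finite B\<close>
      by (simp add: prod.If_cases Int_absorb1 Int_commute card_Diff_subset finite_subset
          flip: Diff_eq)
    finally show ?thesis
      using True by simp
  next
    case False
    then have "edge_set n -` {G} \<inter> set_pmf ?M = {}"
      using edge_set_eq set_Pi_pmf_subset[OF \<open>finite B\<close>] by fastforce
    then show ?thesis
      using False by (metis measure_Int_set_pmf measure_empty pmf_map)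
  qed
qed

lemma pmf_gnp:
  assumes "0 \<le> p" "p \<le> 1"
  shows "pmf (gnp n p) G =
    (if G \<subseteq> all_pairs n then p ^ card G * (1 - p) ^ (card (all_pairs n) - card G) else 0)"
  using assms by (simp add: gnp_eq_edge_set pmf_edge_set_Pi_bernoulli)

lemma pmf_gnp_avoiding:
  assumes D: "D \<subseteq> all_pairs n" and p: "0 \<le> p" "p < 1"
  shows "pmf (gnp_avoiding n p D) G =
    (if G \<inter> D = {} then pmf (gnp n p) G / (1 - p) ^ card D else 0)"
proof (cases "G \<subseteq> all_pairs n \<and> G \<inter> D = {}")
  case True
  have "finite D"
    using D by (rule finite_subset) simp
  with True D have "card G + card D \<le> card (all_pairs n)"
    by (metis card_Un_disjoint card_mono finite_all_pairs finite_subset le_sup_iff)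
  then have "(1 - p) ^ (card (all_pairs n) - card G) =
      (1 - p) ^ (card (all_pairs n) - card D - card G) * (1 - p) ^ card D"
    by (simp flip: power_add)
  with True D p \<open>finite D\<close> show ?thesis
    by (auto simp: gnp_avoiding_def pmf_edge_set_Pi_bernoulli pmf_gnp card_Diff_subset)
qed (use p in \<open>auto simp: gnp_avoiding_def pmf_edge_set_Pi_bernoulli pmf_gnp\<close>)

lemma sum_pmf_gnp_disjoint:
  assumes D: "D \<subseteq> all_pairs n" and p: "0 \<le> p" "p < 1"
  shows "(\<Sum>G\<in>Pow (all_pairs n). pmf (gnp n p) G * of_bool (G \<inter> D = {})) = (1 - p) ^ card D"
proof -
  have "1 = (\<Sum>G\<in>Pow (all_pairs n). pmf (gnp_avoiding n p D) G)"
    using set_pmf_gnp_avoiding by (intro sum_pmf_eq_1[symmetric]) auto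
  also have "\<dots> = (\<Sum>G\<in>Pow (all_pairs n). pmf (gnp n p) G * of_bool (G \<inter> D = {})) / (1 - p) ^ card D"
    unfolding sum_divide_distrib by (intro sum.cong) (auto simp: pmf_gnp_avoiding assms)
  finally show ?thesis
    using p by (simp add: eq_divide_eq)
qed

lemma proper_colouring_chromatic_number: "\<exists>c. proper_colouring n E (chromatic_number n E) c"
  unfolding chromatic_number_def
  by (rule LeastI[of _ n]) (auto simp: proper_colouring_def intro: exI[of _ id])

lemma chromatic_number_le: "proper_colouring n E k c \<Longrightarrow> chromatic_number n E \<le> k"
  unfolding chromatic_number_def by (auto intro: Least_le)

lemma chromatic_number_le_Suc:
  assumes G: "G \<subseteq> all_pairs n" and S_independent: "\<forall>e\<in>G. \<not> e \<subseteq> S"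
    and \<tau>_range: "\<And>v. v < n \<Longrightarrow> v \<notin> S \<Longrightarrow> \<tau> v < m"
    and \<tau>_hom: "\<And>u v. {u, v} \<in> G \<Longrightarrow> u \<notin> S \<Longrightarrow> v \<notin> S \<Longrightarrow> {\<tau> u, \<tau> v} \<in> H \<and> \<tau> u \<noteq> \<tau> v"
  shows "chromatic_number n G \<le> chromatic_number m H + 1"
proof -
  define k where "k = chromatic_number m H"
  obtain c where c: "proper_colouring m H k c"
    using proper_colouring_chromatic_number unfolding k_def by blast
  define c' where "c' v = (if v \<in> S then k else c (\<tau> v))" for v
  have "proper_colouring n G (k + 1) c'"
    unfolding proper_colouring_def
  proof (intro conjI allI impI)
    fix v
    assume "v < n"
    then show "c' v < k + 1"
      using c \<tau>_range by (auto simp: c'_def proper_colouring_def less_Suc_eq)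
  next
    fix u v
    assume uv: "{u, v} \<in> G \<and> u \<noteq> v"
    then have "u < n" "v < n" "\<not> {u, v} \<subseteq> S"
      using G S_independent by (auto simp: all_pairs_eq)
    then show "c' u \<noteq> c' v"
      using c \<tau>_range \<tau>_hom[of u v] uv by (auto simp: c'_def proper_colouring_def)
  qed
  then show ?thesis
    unfolding k_def by (rule chromatic_number_le)
qed

section \<open>Planting and deleting an independent set\<close>

definition pairs_within :: "nat \<Rightarrow> nat set \<Rightarrow> nat set set" where
  "pairs_within n S = {e \<in> all_pairs n. e \<subseteq> S}"

definition pairs_avoiding :: "nat \<Rightarrow> nat set \<Rightarrow> nat set set" where
  "pairs_avoiding n S = {e \<in> all_pairs n. e \<inter> S = {}}"

lemma bij_betw_image_all_pairs:
  assumes \<sigma>: "bij_betw \<sigma> {0..<m} ({..<n} - S)"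
  shows "bij_betw (image \<sigma>) (all_pairs m) (pairs_avoiding n S)"
proof -
  have "card (\<sigma> ` e) = card e" if "e \<in> Pow {0..<m}" for e
    using that \<sigma> by (meson Pow_iff bij_betw_imp_inj_on card_image inj_on_subset)
  then have "bij_betw (image \<sigma>) {e \<in> Pow {0..<m}. card e = 2} {e \<in> Pow ({..<n} - S). card e = 2}"
    by (intro bij_betw_Collect bij_betw_image_Pow \<sigma>) auto
  moreover have "{e \<in> Pow {0..<m}. card e = 2} = all_pairs m"
    by (auto simp: all_pairs_eq)
  moreover have "{e \<in> Pow ({..<n} - S). card e = 2} = pairs_avoiding n S"
    by (auto simp: pairs_avoiding_def all_pairs_eq)
  ultimately show ?thesis
    by simp
qed

definition relabelling :: "nat \<Rightarrow> nat set \<Rightarrow> nat \<Rightarrow> nat" where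
  "relabelling n S = (SOME \<sigma>. bij_betw \<sigma> {0..<n - card S} ({..<n} - S))"

lemma bij_betw_relabelling:
  assumes "S \<subseteq> {..<n}"
  shows "bij_betw (relabelling n S) {0..<n - card S} ({..<n} - S)"
proof -
  have "card ({..<n} - S) = n - card S"
    using assms by (simp add: card_Diff_subset finite_subset)
  then show ?thesis
    unfolding relabelling_def by (metis ex_bij_betw_nat_finite finite_Diff finite_lessThan someI_ex)
qed

text \<open>The planted graph (G(n,p) without edges inside S) paired with its restriction to the
  complement of S, relabelled to the vertex set \<open>{0..<n - card S}\<close>.\<close>
definition deletion_coupling :: "nat \<Rightarrow> real \<Rightarrow> nat set \<Rightarrow> (nat set set \<times> nat set set) pmf" where
  "deletion_coupling n p S =
     map_pmf (\<lambda>f. (edge_set n f, {e \<in> all_pairs (n - card S). f (relabelling n S ` e)}))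
       (Pi_pmf (all_pairs n - pairs_within n S) False (\<lambda>_. bernoulli_pmf p))"

lemma map_fst_deletion_coupling:
  "map_pmf fst (deletion_coupling n p S) = gnp_avoiding n p (pairs_within n S)"
  by (simp add: deletion_coupling_def gnp_avoiding_def map_pmf_comp)

lemma map_snd_deletion_coupling:
  assumes S: "S \<subseteq> {..<n}"
  shows "map_pmf snd (deletion_coupling n p S) = gnp (n - card S) p"
proof -
  let ?m = "n - card S" and ?B = "\<lambda>_::nat set. bernoulli_pmf p"
  define \<sigma> where "\<sigma> = relabelling n S"
  define h where "h e = (if e \<in> all_pairs ?m then \<sigma> ` e else {})" for e
  \<comment> \<open>sending non-pairs to \<open>{}\<close>, outside \<open>pairs_avoiding n S\<close>, is what \<open>Pi_pmf_bij_betw\<close> needs\<close>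
  have "bij_betw (image \<sigma>) (all_pairs ?m) (pairs_avoiding n S)"
    unfolding \<sigma>_def using bij_betw_relabelling[OF S] by (rule bij_betw_image_all_pairs)
  then have h: "bij_betw h (all_pairs ?m) (pairs_avoiding n S)"
    by (rule bij_betw_cong[THEN iffD1, rotated]) (simp add: h_def)
  have "Pi_pmf (all_pairs ?m) False ?B = map_pmf (\<lambda>g. g \<circ> h) (Pi_pmf (pairs_avoiding n S) False ?B)"
    by (intro Pi_pmf_bij_betw h) (auto simp: h_def pairs_avoiding_def all_pairs_eq)
  also have "Pi_pmf (pairs_avoiding n S) False ?B =
      map_pmf (\<lambda>f x. if x \<in> pairs_avoiding n S then f x else False)
        (Pi_pmf (all_pairs n - pairs_within n S) False ?B)"
    by (rule Pi_pmf_subset) (auto simp: pairs_avoiding_def pairs_within_def all_pairs_eq Int_absorb2)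
  finally have "gnp ?m p = map_pmf (\<lambda>f. edge_set ?m (\<lambda>e. if h e \<in> pairs_avoiding n S then f (h e) else False))
      (Pi_pmf (all_pairs n - pairs_within n S) False ?B)"
    by (simp add: gnp_eq_edge_set map_pmf_comp o_def)
  also have "\<dots> = map_pmf snd (deletion_coupling n p S)"
    unfolding deletion_coupling_def map_pmf_comp
    using bij_betwE[OF h] by (intro map_pmf_cong refl) (auto simp: edge_set_def h_def \<sigma>_def)
  finally show ?thesis ..
qed

lemma chromatic_number_deletion_coupling:
  assumes S: "S \<subseteq> {..<n}" and GH: "(G, H) \<in> set_pmf (deletion_coupling n p S)"
  shows "chromatic_number n G \<le> chromatic_number (n - card S) H + 1"
proof -
  let ?m = "n - card S" and ?D = "all_pairs n - pairs_within n S"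
  define \<sigma> where "\<sigma> = relabelling n S"
  define \<tau> where "\<tau> = the_inv_into {0..<?m} \<sigma>"
  have \<sigma>: "bij_betw \<sigma> {0..<?m} ({..<n} - S)"
    unfolding \<sigma>_def using S by (rule bij_betw_relabelling)
  have \<tau>: "bij_betw \<tau> ({..<n} - S) {0..<?m}"
    unfolding \<tau>_def using \<sigma> by (rule bij_betw_the_inv_into)
  obtain f where f: "f \<in> set_pmf (Pi_pmf ?D False (\<lambda>_. bernoulli_pmf p))"
    and G: "G = edge_set n f" and H: "H = {e \<in> all_pairs ?m. f (\<sigma> ` e)}"
    using GH by (auto simp: deletion_coupling_def \<sigma>_def)
  have f_outside: "\<not> f e" if "e \<notin> ?D" for e
    using set_Pi_pmf_subset[of ?D False "\<lambda>_. bernoulli_pmf p"] f that by auto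
  show ?thesis
  proof (rule chromatic_number_le_Suc[where \<tau> = \<tau>])
    show "G \<subseteq> all_pairs n"
      by (simp add: G edge_set_def)
    show "\<forall>e\<in>G. \<not> e \<subseteq> S"
      using f_outside by (auto simp: G edge_set_def pairs_within_def)
    show "\<tau> v < ?m" if "v < n" "v \<notin> S" for v
      using bij_betwE[OF \<tau>] that by auto
    show "{\<tau> u, \<tau> v} \<in> H \<and> \<tau> u \<noteq> \<tau> v" if uv: "{u, v} \<in> G" "u \<notin> S" "v \<notin> S" for u v
    proof -
      have "u < n" "v < n" "u \<noteq> v" "f {u, v}"
        using uv by (auto simp: G edge_set_def all_pairs_eq card_2_iff doubleton_eq_iff)
      then have "\<tau> u \<noteq> \<tau> v" "\<tau> u < ?m" "\<tau> v < ?m" "\<sigma> ` {\<tau> u, \<tau> v} = {u, v}"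
        using uv \<tau> \<sigma> unfolding \<tau>_def
        by (auto simp: bij_betw_def inj_on_eq_iff f_the_inv_into_f_bij_betw)
      with \<open>f {u, v}\<close> show ?thesis
        by (auto simp: H all_pairs_eq)
    qed
  qed
qed

definition vertex_subsets :: "nat \<Rightarrow> nat \<Rightarrow> nat set set" where
  "vertex_subsets n a = {S. S \<subseteq> {..<n} \<and> card S = a}"

definition independent_sets :: "nat \<Rightarrow> nat \<Rightarrow> nat set set \<Rightarrow> nat set set" where
  "independent_sets n a G = {S \<in> vertex_subsets n a. G \<inter> pairs_within n S = {}}"

text \<open>The expected number of independent a-sets in G(n,p).\<close>
definition mu :: "nat \<Rightarrow> nat \<Rightarrow> real \<Rightarrow> real" where
  "mu n a p = real (n choose a) * (1 - p) ^ (a choose 2)"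

definition planted :: "nat \<Rightarrow> nat \<Rightarrow> real \<Rightarrow> nat set set pmf" where
  "planted n a p = pmf_of_set (vertex_subsets n a) \<bind> (\<lambda>S. gnp_avoiding n p (pairs_within n S))"

lemma finite_vertex_subsets [simp]: "finite (vertex_subsets n a)"
  by (rule finite_subset[of _ "Pow {..<n}"]) (auto simp: vertex_subsets_def)

lemma card_vertex_subsets: "card (vertex_subsets n a) = n choose a"
  by (simp add: vertex_subsets_def n_subsets)

lemma vertex_subsets_nonempty: "a \<le> n \<Longrightarrow> vertex_subsets n a \<noteq> {}"
  using card_vertex_subsets[of n a] by auto

lemma mu_pos: "a \<le> n \<Longrightarrow> p < 1 \<Longrightarrow> 0 < mu n a p"
  by (simp add: mu_def)

lemma pairs_within_subset: "pairs_within n S \<subseteq> all_pairs n"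
  by (auto simp: pairs_within_def)

lemma card_pairs_within:
  assumes "S \<subseteq> {..<n}"
  shows "card (pairs_within n S) = card S choose 2"
proof -
  have "pairs_within n S = {e. e \<subseteq> S \<and> card e = 2}"
    using assms by (auto simp: pairs_within_def all_pairs_eq)
  then show ?thesis
    using assms by (simp add: n_subsets finite_subset)
qed

lemma pairs_within_Int: "pairs_within n S \<inter> pairs_within n T = pairs_within n (S \<inter> T)"
  by (auto simp: pairs_within_def)

lemma set_pmf_planted: "set_pmf (planted n a p) \<subseteq> Pow (all_pairs n)"
  unfolding planted_def set_bind_pmf by (intro UN_least set_pmf_gnp_avoiding)

lemma pmf_planted:
  assumes p: "0 \<le> p" "p < 1" and a: "a \<le> n"
  shows "pmf (planted n a p) G = pmf (gnp n p) G * (card (independent_sets n a G) / mu n a p)"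
proof -
  let ?SS = "vertex_subsets n a"
  have "pmf (planted n a p) G = (\<Sum>S\<in>?SS. pmf (gnp_avoiding n p (pairs_within n S)) G) / card ?SS"
    using a by (simp add: planted_def pmf_bind integral_pmf_of_set vertex_subsets_nonempty)
  also have "\<dots> = (\<Sum>S\<in>?SS. pmf (gnp n p) G * of_bool (G \<inter> pairs_within n S = {}))
      / (1 - p) ^ (a choose 2) / card ?SS"
  proof -
    have "pmf (gnp_avoiding n p (pairs_within n S)) G =
        pmf (gnp n p) G * of_bool (G \<inter> pairs_within n S = {}) / (1 - p) ^ (a choose 2)"
      if "S \<in> ?SS" for S
      using that p by (simp add: pmf_gnp_avoiding pairs_within_subset card_pairs_within vertex_subsets_def)
    then have "(\<Sum>S\<in>?SS. pmf (gnp_avoiding n p (pairs_within n S)) G) =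
        (\<Sum>S\<in>?SS. pmf (gnp n p) G * of_bool (G \<inter> pairs_within n S = {}) / (1 - p) ^ (a choose 2))"
      by (rule sum.cong[OF refl])
    then show ?thesis
      by (simp only: sum_divide_distrib)
  qed
  also have "(\<Sum>S\<in>?SS. pmf (gnp n p) G * of_bool (G \<inter> pairs_within n S = {})) =
      pmf (gnp n p) G * card (independent_sets n a G)"
    by (simp add: independent_sets_def Int_def)
  also have "pmf (gnp n p) G * card (independent_sets n a G) / (1 - p) ^ (a choose 2) / card ?SS =
      pmf (gnp n p) G * (card (independent_sets n a G) / mu n a p)"
    by (simp add: mu_def card_vertex_subsets)
  finally show ?thesis .
qed

lemma planted_deletion_coupling:
  assumes a: "a \<le> n"
  shows "\<exists>q. is_coupling q (planted n a p) (gnp (n - a) p) \<and>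
    set_pmf q \<subseteq> {(G, H). chromatic_number n G \<le> chromatic_number (n - a) H + 1}"
proof (intro exI conjI)
  let ?SS = "vertex_subsets n a"
  define q where "q = pmf_of_set ?SS \<bind> deletion_coupling n p"
  have SS: "set_pmf (pmf_of_set ?SS) = ?SS"
    using a by (simp add: vertex_subsets_nonempty)
  have "map_pmf fst q = planted n a p"
    by (simp add: q_def map_bind_pmf map_fst_deletion_coupling planted_def)
  moreover have "map_pmf snd q = pmf_of_set ?SS \<bind> (\<lambda>_. gnp (n - a) p)"
    unfolding q_def map_bind_pmf
    by (intro bind_pmf_cong refl) (use SS in \<open>auto simp: map_snd_deletion_coupling vertex_subsets_def\<close>)
  ultimately show "is_coupling q (planted n a p) (gnp (n - a) p)"
    by (simp add: is_coupling_def)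
  show "set_pmf q \<subseteq> {(G, H). chromatic_number n G \<le> chromatic_number (n - a) H + 1}"
  proof safe
    fix G H
    assume "(G, H) \<in> set_pmf q"
    then obtain S where "S \<in> ?SS" "(G, H) \<in> set_pmf (deletion_coupling n p S)"
      by (auto simp: q_def SS)
    then show "chromatic_number n G \<le> chromatic_number (n - a) H + 1"
      using chromatic_number_deletion_coupling by (auto simp: vertex_subsets_def)
  qed
qed

section \<open>The second moment of the number of independent sets\<close>

lemma power_card_pairs_within_Un:
  fixes p :: real
  assumes p: "p < 1" and S: "S \<in> vertex_subsets n a" and T: "T \<in> vertex_subsets n a"
  shows "(1 - p) ^ card (pairs_within n S \<union> pairs_within n T) =
    ((1 - p) ^ (a choose 2))\<^sup>2 * (1 / (1 - p)) ^ (card (S \<inter> T) choose 2)"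
proof -
  have "finite (pairs_within n S)" "finite (pairs_within n T)"
    by (auto intro: finite_subset[OF pairs_within_subset])
  then have "card (pairs_within n S \<union> pairs_within n T) + (card (S \<inter> T) choose 2) = 2 * (a choose 2)"
    using card_Un_Int[of "pairs_within n S" "pairs_within n T"] S T
    by (simp add: pairs_within_Int card_pairs_within vertex_subsets_def le_infI1)
  then have "(1 - p) ^ card (pairs_within n S \<union> pairs_within n T) * (1 - p) ^ (card (S \<inter> T) choose 2) =
      (1 - p) ^ (2 * (a choose 2))"
    by (simp only: power_add[symmetric])
  also have "\<dots> = ((1 - p) ^ (a choose 2))\<^sup>2"
    by (simp add: mult.commute[of 2] power_mult)
  finally show ?thesis
    using p by (simp add: power_one_over field_simps)
qed

lemma sum_gnp_card_independent_sets_sq: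
  assumes p: "0 \<le> p" "p < 1"
  shows "(\<Sum>G\<in>Pow (all_pairs n). pmf (gnp n p) G * (real (card (independent_sets n a G)))\<^sup>2) =
    ((1 - p) ^ (a choose 2))\<^sup>2 *
      (\<Sum>S\<in>vertex_subsets n a. \<Sum>T\<in>vertex_subsets n a. (1 / (1 - p)) ^ (card (S \<inter> T) choose 2))"
proof -
  let ?SS = "vertex_subsets n a"
  have card_eq: "real (card (independent_sets n a G)) = (\<Sum>S\<in>?SS. of_bool (G \<inter> pairs_within n S = {}))"
    for G by (simp add: independent_sets_def Int_def)
  have "pmf (gnp n p) G * (real (card (independent_sets n a G)))\<^sup>2 =
      (\<Sum>S\<in>?SS. \<Sum>T\<in>?SS. pmf (gnp n p) G * of_bool (G \<inter> (pairs_within n S \<union> pairs_within n T) = {}))"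
    for G
    unfolding card_eq power2_eq_square sum_product
    by (simp only: sum_distrib_left Int_Un_distrib Un_empty of_bool_conj)
  then have "(\<Sum>G\<in>Pow (all_pairs n). pmf (gnp n p) G * (real (card (independent_sets n a G)))\<^sup>2) =
      (\<Sum>G\<in>Pow (all_pairs n). \<Sum>S\<in>?SS. \<Sum>T\<in>?SS.
         pmf (gnp n p) G * of_bool (G \<inter> (pairs_within n S \<union> pairs_within n T) = {}))"
    by (simp only:)
  also have "\<dots> = (\<Sum>S\<in>?SS. \<Sum>T\<in>?SS. \<Sum>G\<in>Pow (all_pairs n).
      pmf (gnp n p) G * of_bool (G \<inter> (pairs_within n S \<union> pairs_within n T) = {}))"
    by (rule trans[OF sum.swap], rule sum.cong[OF refl], rule sum.swap)
  also have "\<dots> = (\<Sum>S\<in>?SS. \<Sum>T\<in>?SS. (1 - p) ^ card (pairs_within n S \<union> pairs_within n T))"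
    using p pairs_within_subset by (intro sum.cong refl sum_pmf_gnp_disjoint) auto
  also have "\<dots> = ((1 - p) ^ (a choose 2))\<^sup>2 *
      (\<Sum>S\<in>?SS. \<Sum>T\<in>?SS. (1 / (1 - p)) ^ (card (S \<inter> T) choose 2))"
    using p by (simp add: power_card_pairs_within_Un sum_distrib_left)
  finally show ?thesis .
qed

lemma card_vertex_subsets_overlap_le:
  assumes S: "S \<in> vertex_subsets n a"
  shows "card {T \<in> vertex_subsets n a. card (S \<inter> T) = i} \<le> (a choose i) * ((n - a) choose (a - i))"
proof -
  have "finite S" "S \<subseteq> {..<n}" "card S = a"
    using S by (auto simp: vertex_subsets_def finite_subset)
  define U where "U = {U. U \<subseteq> S \<and> card U = i}"
  define W where "W = {W. W \<subseteq> {..<n} - S \<and> card W = a - i}"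
  have "card {T \<in> vertex_subsets n a. card (S \<inter> T) = i} \<le> card (U \<times> W)"
  proof (rule card_inj_on_le[where f = "\<lambda>T. (S \<inter> T, T - S)"])
    show "inj_on (\<lambda>T. (S \<inter> T, T - S)) {T \<in> vertex_subsets n a. card (S \<inter> T) = i}"
    proof (rule inj_onI)
      fix T T'
      assume "(S \<inter> T, T - S) = (S \<inter> T', T' - S)"
      then have "S \<inter> T = S \<inter> T'" "T - S = T' - S"
        by auto
      then show "T = T'"
        by blast
    qed
    show "(\<lambda>T. (S \<inter> T, T - S)) ` {T \<in> vertex_subsets n a. card (S \<inter> T) = i} \<subseteq> U \<times> W"
    proof (rule image_subsetI)
      fix T
      assume "T \<in> {T \<in> vertex_subsets n a. card (S \<inter> T) = i}"
      then have T: "T \<in> vertex_subsets n a" "i = card (S \<inter> T)"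
        by auto
      then have "finite T" "card T = a" "T \<subseteq> {..<n}"
        by (auto simp: vertex_subsets_def finite_subset)
      then have "card (T - S) = a - i"
        using T(2) by (simp add: card_Diff_subset_Int Int_commute)
      then show "(S \<inter> T, T - S) \<in> U \<times> W"
        using T(2) \<open>T \<subseteq> {..<n}\<close> by (auto simp: U_def W_def)
    qed
    show "finite (U \<times> W)"
      using \<open>finite S\<close> by (simp add: U_def W_def)
  qed
  also have "card (U \<times> W) = (a choose i) * ((n - a) choose (a - i))"
    using \<open>finite S\<close> \<open>S \<subseteq> {..<n}\<close> \<open>card S = a\<close>
    by (simp add: U_def W_def card_cartesian_product n_subsets card_Diff_subset)
  finally show ?thesis .
qed

text \<open>\<open>overlap_term n a p i / mu n a p\<close> is the contribution to \<open>E[X\<^sup>2] / E[X]\<^sup>2\<close> of the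
  pairs of a-sets meeting in exactly i vertices, X being the number of independent a-sets.\<close>
definition overlap_term :: "nat \<Rightarrow> nat \<Rightarrow> real \<Rightarrow> nat \<Rightarrow> real" where
  "overlap_term n a p i =
     real (a choose i) * real ((n - a) choose (a - i)) * (1 - p) ^ (a choose 2) * (1 / (1 - p)) ^ (i choose 2)"

lemma overlap_weight_le:
  fixes b :: real
  assumes "0 \<le> b" and S: "S \<in> vertex_subsets n a" and T: "T \<in> vertex_subsets n a"
  shows "b ^ (card (S \<inter> T) choose 2) \<le>
    1 + (if T = S then b ^ (a choose 2) else 0) +
      (\<Sum>i\<in>{2..<a}. if card (S \<inter> T) = i then b ^ (i choose 2) else 0)"
proof -
  have "finite S" "card S = a" "finite T" "card T = a"
    using S T by (auto simp: vertex_subsets_def finite_subset)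
  have "card (S \<inter> T) \<le> a"
    using card_mono[OF \<open>finite S\<close>, of "S \<inter> T"] \<open>card S = a\<close> by auto
  moreover have "T = S" if "card (S \<inter> T) = a"
  proof -
    have "S \<inter> T = S"
      using card_subset_eq[of S "S \<inter> T"] \<open>finite S\<close> \<open>card S = a\<close> that by auto
    then show "T = S"
      using card_subset_eq[of T S] \<open>finite T\<close> \<open>card T = a\<close> \<open>card S = a\<close> by auto
  qed
  ultimately consider "card (S \<inter> T) < 2" | "T = S" | "card (S \<inter> T) \<in> {2..<a}"
    by fastforce
  then show ?thesis
    using \<open>0 \<le> b\<close> \<open>card S = a\<close> by cases (auto simp: binomial_eq_0 sum_nonneg)
qed

lemma sum_overlap_weights_le:
  assumes p: "0 < p" "p < 1" and S: "S \<in> vertex_subsets n a"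
  shows "(1 - p) ^ (a choose 2) * (\<Sum>T\<in>vertex_subsets n a. (1 / (1 - p)) ^ (card (S \<inter> T) choose 2))
    \<le> mu n a p + 1 + (\<Sum>i\<in>{2..<a}. overlap_term n a p i)"
proof -
  let ?SS = "vertex_subsets n a" and ?b = "1 / (1 - p)"
  have swap: "(\<Sum>T\<in>?SS. \<Sum>i\<in>{2..<a}. if card (S \<inter> T) = i then ?b ^ (i choose 2) else 0) =
      (\<Sum>i\<in>{2..<a}. real (card {T \<in> ?SS. card (S \<inter> T) = i}) * ?b ^ (i choose 2))"
    by (subst sum.swap) (simp add: sum.inter_filter[symmetric])
  have "(\<Sum>T\<in>?SS. ?b ^ (card (S \<inter> T) choose 2)) \<le> (\<Sum>T\<in>?SS.
      1 + (if T = S then ?b ^ (a choose 2) else 0) +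
      (\<Sum>i\<in>{2..<a}. if card (S \<inter> T) = i then ?b ^ (i choose 2) else 0))"
    using p S by (intro sum_mono overlap_weight_le) auto
  also have "\<dots> = real (n choose a) + ?b ^ (a choose 2) +
      (\<Sum>i\<in>{2..<a}. real (card {T \<in> ?SS. card (S \<inter> T) = i}) * ?b ^ (i choose 2))"
    using S unfolding sum.distrib swap by (simp add: card_vertex_subsets)
  also have "\<dots> \<le> real (n choose a) + ?b ^ (a choose 2)
      + (\<Sum>i\<in>{2..<a}. real (a choose i) * real ((n - a) choose (a - i)) * ?b ^ (i choose 2))"
    using card_vertex_subsets_overlap_le[OF S] p
    by (intro add_left_mono sum_mono mult_right_mono) (auto simp flip: of_nat_mult)
  finally have "(1 - p) ^ (a choose 2) * (\<Sum>T\<in>?SS. ?b ^ (card (S \<inter> T) choose 2)) \<le>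
      (1 - p) ^ (a choose 2) * (real (n choose a) + ?b ^ (a choose 2)
      + (\<Sum>i\<in>{2..<a}. real (a choose i) * real ((n - a) choose (a - i)) * ?b ^ (i choose 2)))"
    using p by (intro mult_left_mono) auto
  also have "\<dots> = mu n a p + 1 + (\<Sum>i\<in>{2..<a}. overlap_term n a p i)"
    using p by (simp add: mu_def overlap_term_def power_one_over sum_distrib_left distrib_left mult_ac)
  finally show ?thesis .
qed

lemma second_moment_le:
  assumes p: "0 < p" "p < 1" and a: "a \<le> n"
  shows "(\<Sum>G\<in>Pow (all_pairs n). pmf (gnp n p) G * (card (independent_sets n a G) / mu n a p)\<^sup>2)
    \<le> 1 + (1 + (\<Sum>i\<in>{2..<a}. overlap_term n a p i)) / mu n a p"
proof -
  let ?SS = "vertex_subsets n a" and ?c = "(1 - p) ^ (a choose 2)"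
  define \<Sigma> where "\<Sigma> = (\<Sum>i\<in>{2..<a}. overlap_term n a p i)"
  have "0 < mu n a p" "0 < ?c"
    using a p by (auto intro: mu_pos)
  have "(\<Sum>G\<in>Pow (all_pairs n). pmf (gnp n p) G * (card (independent_sets n a G) / mu n a p)\<^sup>2)
      = (\<Sum>G\<in>Pow (all_pairs n). pmf (gnp n p) G * (real (card (independent_sets n a G)))\<^sup>2) / (mu n a p)\<^sup>2"
    by (simp add: power_divide sum_divide_distrib)
  also have "\<dots> = ?c\<^sup>2 * (\<Sum>S\<in>?SS. \<Sum>T\<in>?SS. (1 / (1 - p)) ^ (card (S \<inter> T) choose 2)) / (mu n a p)\<^sup>2"
    using p by (simp only: sum_gnp_card_independent_sets_sq)
  also have "\<dots> = ?c * (\<Sum>S\<in>?SS. ?c * (\<Sum>T\<in>?SS. (1 / (1 - p)) ^ (card (S \<inter> T) choose 2))) / (mu n a p)\<^sup>2"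
    by (simp add: power2_eq_square sum_distrib_left mult.assoc)
  also have "\<dots> \<le> ?c * (\<Sum>S\<in>?SS. mu n a p + 1 + \<Sigma>) / (mu n a p)\<^sup>2"
    using p \<open>0 < ?c\<close> unfolding \<Sigma>_def
    by (intro divide_right_mono mult_left_mono sum_mono sum_overlap_weights_le) auto
  also have "\<dots> = mu n a p * (mu n a p + 1 + \<Sigma>) / (mu n a p)\<^sup>2"
    by (simp add: card_vertex_subsets mu_def)
  also have "\<dots> = 1 + (1 + \<Sigma>) / mu n a p"
    using \<open>0 < mu n a p\<close> by (simp add: power2_eq_square field_simps)
  finally show ?thesis
    unfolding \<Sigma>_def .
qed

lemma sum_min_gnp_planted_ge:
  assumes p: "0 < p" "p < 1" and a: "a \<le> n"
  shows "1 - sqrt (1 + (\<Sum>i\<in>{2..<a}. overlap_term n a p i)) / (2 * sqrt (mu n a p))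
    \<le> (\<Sum>G\<in>Pow (all_pairs n). min (pmf (gnp n p) G) (pmf (planted n a p) G))"
proof -
  let ?Y = "\<lambda>G. card (independent_sets n a G) / mu n a p"
  have "(\<Sum>G\<in>Pow (all_pairs n). pmf (gnp n p) G * ?Y G) = (\<Sum>G\<in>Pow (all_pairs n). pmf (planted n a p) G)"
    using p a by (simp add: pmf_planted)
  also have "\<dots> = 1"
    using set_pmf_planted by (intro sum_pmf_eq_1) auto
  finally have "1 - sqrt ((\<Sum>G\<in>Pow (all_pairs n). pmf (gnp n p) G * (?Y G)\<^sup>2) - 1) / 2
      \<le> (\<Sum>G\<in>Pow (all_pairs n). min (pmf (gnp n p) G) (pmf (gnp n p) G * ?Y G))"
    using set_pmf_gnp by (intro sum_min_density_ge sum_pmf_eq_1) auto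
  moreover have "sqrt ((\<Sum>G\<in>Pow (all_pairs n). pmf (gnp n p) G * (?Y G)\<^sup>2) - 1)
      \<le> sqrt (1 + (\<Sum>i\<in>{2..<a}. overlap_term n a p i)) / sqrt (mu n a p)"
    using second_moment_le[OF p a] by (simp flip: real_sqrt_divide)
  ultimately show ?thesis
    using p a by (simp add: pmf_planted)
qed

lemma exists_chromatic_coupling:
  assumes p: "0 < p" "p < 1" and a: "a \<le> n"
  shows "\<exists>q. is_coupling q (gnp n p) (gnp (n - a) p) \<and>
    1 - sqrt (1 + (\<Sum>i\<in>{2..<a}. overlap_term n a p i)) / (2 * sqrt (mu n a p))
      \<le> measure_pmf.prob q {(G, H). chromatic_number n G \<le> chromatic_number (n - a) H + 1}"
proof -
  obtain q' where "is_coupling q' (planted n a p) (gnp (n - a) p)"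
    "set_pmf q' \<subseteq> {(G, H). chromatic_number n G \<le> chromatic_number (n - a) H + 1}"
    using planted_deletion_coupling[OF a] by blast
  from exists_coupling_prob_ge_overlap[OF this _ set_pmf_gnp[of n p] set_pmf_planted _
      set_pmf_gnp[of "n - a" p]]
  show ?thesis
    using sum_min_gnp_planted_ge[OF p a] by (auto intro: order_trans)
qed

section \<open>Asymptotics of the overlap sum\<close>

lemma of_nat_choose_two: "real (k choose 2) = real k * (real k - 1) / 2"
  by (induction k) (auto simp: numeral_2_eq_2 field_simps)

lemma powr_mult_log:
  assumes "1 < b" "0 < x"
  shows "b powr (c * log b x) = x powr c"
proof -
  have "b powr (c * log b x) = (b powr log b x) powr c"
    by (simp add: powr_powr mult.commute)
  then show ?thesis
    using assms by simp
qed

lemma choose_diff_mult_pow_le: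
  assumes "k \<le> a" "a \<le> n"
  shows "(n choose (a - k)) * (n - a) ^ k \<le> (n choose a) * a ^ k"
  using assms(1)
proof (induction k)
  case (Suc k)
  define j where "j = a - Suc k"
  have j: "a - k = Suc j" "j < a"
    using Suc.prems by (auto simp: j_def)
  have "(n choose j) * (n - a) \<le> (n choose j) * (n - j)"
    using j by (intro mult_left_mono) auto
  also have "\<dots> = (n choose (a - k)) * Suc j"
    using binomial_absorb_comp[of n j] binomial_absorption[of j n] by (simp add: j mult.commute)
  also have "\<dots> \<le> (n choose (a - k)) * a"
    using j by (intro mult_left_mono) auto
  finally have "(n choose (a - Suc k)) * (n - a) ^ Suc k \<le> a * ((n choose (a - k)) * (n - a) ^ k)"
    by (simp add: j_def mult_ac mult_right_mono)
  also have "\<dots> \<le> a * ((n choose a) * a ^ k)"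
    using Suc by (intro mult_left_mono) auto
  finally show ?case
    by (simp add: mult_ac)
qed simp

lemma overlap_term_le_mu:
  assumes p: "0 < p" "p < 1" and b: "b = 1 / (1 - p)" and i: "i \<le> a" and a: "a < n"
  shows "overlap_term n a p i \<le> mu n a p * (real a ^ 2 * b powr ((real i - 1) / 2) / real (n - a)) ^ i"
proof -
  have "0 < b" "0 < real (n - a)"
    using p b a by auto
  have choose_le: "real (a choose i) \<le> real a ^ i"
    using binomial_le_pow[OF i] by (metis of_nat_le_iff of_nat_power)
  have "real ((n - a) choose (a - i)) * real (n - a) ^ i \<le> real (n choose (a - i)) * real (n - a) ^ i"
    by (intro mult_right_mono) (auto simp: binomial_right_mono)
  also have "\<dots> \<le> real (n choose a) * real a ^ i"
    using choose_diff_mult_pow_le[OF i less_imp_le[OF a]] by (metis of_nat_le_iff of_nat_mult of_nat_power)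
  finally have choose_diff_le: "real ((n - a) choose (a - i)) \<le> real (n choose a) * real a ^ i / real (n - a) ^ i"
    using \<open>0 < real (n - a)\<close> by (simp add: field_simps)
  have "(1 / (1 - p)) ^ (i choose 2) = b powr real (i choose 2)"
    using \<open>0 < b\<close> b by (simp add: powr_realpow)
  also have "\<dots> = (b powr ((real i - 1) / 2)) ^ i"
    using \<open>0 < b\<close> by (simp add: powr_power of_nat_choose_two mult_ac)
  finally have b_power: "(1 / (1 - p)) ^ (i choose 2) = (b powr ((real i - 1) / 2)) ^ i" .
  have "overlap_term n a p i =
      real (a choose i) * real ((n - a) choose (a - i)) * (1 - p) ^ (a choose 2) * (b powr ((real i - 1) / 2)) ^ i"
    by (simp add: overlap_term_def b_power)
  also have "\<dots> \<le> real a ^ i * (real (n choose a) * real a ^ i / real (n - a) ^ i)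
      * (1 - p) ^ (a choose 2) * (b powr ((real i - 1) / 2)) ^ i"
    using p choose_le choose_diff_le by (intro mult_right_mono mult_mono) auto
  also have "\<dots> = mu n a p * (real a ^ 2 * b powr ((real i - 1) / 2) / real (n - a)) ^ i"
    by (simp add: mu_def power2_eq_square field_simps)
  finally show ?thesis .
qed

lemma overlap_term_le_pow:
  assumes p: "0 < p" "p < 1" and b: "b = 1 / (1 - p)" and i: "i \<le> a"
  shows "overlap_term n a p i \<le> (real a * real n * b powr (- (real a + real i - 1) / 2)) ^ (a - i)"
proof -
  have "0 < b"
    using p b by simp
  have choose_le: "real (a choose i) \<le> real a ^ (a - i)"
    using binomial_le_pow[of "a - i" a] binomial_symmetric[OF i] by (metis diff_le_self of_nat_le_iff of_nat_power)
  have choose_diff_le: "real ((n - a) choose (a - i)) \<le> real n ^ (a - i)"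
  proof (cases "a - i \<le> n - a")
    case True
    then have "(n - a) choose (a - i) \<le> n ^ (a - i)"
      using binomial_le_pow[OF True] by (meson diff_le_self le_trans power_mono zero_le)
    then show ?thesis
      by (metis of_nat_le_iff of_nat_power)
  qed (simp add: binomial_eq_0)
  have "1 - p = 1 / b"
    using b p by simp
  then have "(1 - p) ^ (a choose 2) * (1 / (1 - p)) ^ (i choose 2) =
      b powr (real (i choose 2) - real (a choose 2))"
    using \<open>0 < b\<close> by (simp add: powr_diff powr_realpow power_one_over)
  also have "real (i choose 2) - real (a choose 2) = real (a - i) * (- (real a + real i - 1) / 2)"
    using i by (simp add: of_nat_choose_two field_simps)
  also have "b powr \<dots> = (b powr (- (real a + real i - 1) / 2)) ^ (a - i)"
    using \<open>0 < b\<close> by (simp add: powr_power)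
  finally have b_power: "(1 - p) ^ (a choose 2) * (1 / (1 - p)) ^ (i choose 2) =
      (b powr (- (real a + real i - 1) / 2)) ^ (a - i)" .
  have "overlap_term n a p i =
      real (a choose i) * real ((n - a) choose (a - i)) * (b powr (- (real a + real i - 1) / 2)) ^ (a - i)"
    by (simp add: overlap_term_def mult.assoc b_power)
  also have "\<dots> \<le> real a ^ (a - i) * real n ^ (a - i) * (b powr (- (real a + real i - 1) / 2)) ^ (a - i)"
    using choose_le choose_diff_le by (intro mult_right_mono mult_mono) auto
  also have "\<dots> = (real a * real n * b powr (- (real a + real i - 1) / 2)) ^ (a - i)"
    by (simp add: power_mult_distrib)
  finally show ?thesis .
qed

context
  fixes p b A :: real and n a :: nat
  assumes p: "0 < p" "p < 1" and b: "b = 1 / (1 - p)"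
    and n: "1 \<le> n" and a_half: "real a \<le> real n / 2" and a_le_A: "real a \<le> A"
begin

private lemma b_gt_1: "1 < b"
  using p by (simp add: b)

private lemma a_less_n: "a < n"
  using a_half n by linarith

private lemma mu_nonneg: "0 \<le> mu n a p"
  using mu_pos[of a n p] a_less_n p by simp

lemma overlap_term_le_mu_ratio:
  assumes i: "i \<le> a"
  shows "overlap_term n a p i \<le> mu n a p * (2 * A\<^sup>2 * b powr ((real i - 1) / 2) / real n) ^ i"
proof -
  have "real n / 2 \<le> real (n - a)"
    using a_half a_less_n by simp
  have "real a ^ 2 * b powr ((real i - 1) / 2) / real (n - a) \<le> A\<^sup>2 * b powr ((real i - 1) / 2) / (real n / 2)"
    using a_half a_le_A n \<open>real n / 2 \<le> real (n - a)\<close>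
    by (intro frac_le mult_right_mono power_mono) auto
  then have "(real a ^ 2 * b powr ((real i - 1) / 2) / real (n - a)) ^ i
      \<le> (2 * A\<^sup>2 * b powr ((real i - 1) / 2) / real n) ^ i"
    by (intro power_mono) (auto simp: field_simps)
  then have "mu n a p * (real a ^ 2 * b powr ((real i - 1) / 2) / real (n - a)) ^ i
      \<le> mu n a p * (2 * A\<^sup>2 * b powr ((real i - 1) / 2) / real n) ^ i"
    using mu_nonneg by (rule mult_left_mono)
  then show ?thesis
    using overlap_term_le_mu[OF p b i a_less_n] by linarith
qed

lemma overlap_term_le_small_overlap:
  assumes i: "2 \<le> i" "i \<le> 50" "i \<le> a" and small: "2 * A\<^sup>2 * b ^ 25 / real n \<le> 1"
  shows "overlap_term n a p i \<le> mu n a p * (2 * A\<^sup>2 * b ^ 25 / real n)\<^sup>2"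
proof -
  have "b powr ((real i - 1) / 2) \<le> b powr 25"
    using b_gt_1 i by (intro powr_mono) auto
  then have "2 * A\<^sup>2 * b powr ((real i - 1) / 2) / real n \<le> 2 * A\<^sup>2 * b ^ 25 / real n"
    using b_gt_1 by (intro divide_right_mono mult_left_mono) (auto simp: powr_realpow)
  then have "(2 * A\<^sup>2 * b powr ((real i - 1) / 2) / real n) ^ i \<le> (2 * A\<^sup>2 * b ^ 25 / real n) ^ i"
    by (intro power_mono) auto
  also have "\<dots> \<le> (2 * A\<^sup>2 * b ^ 25 / real n)\<^sup>2"
    using i small b_gt_1 by (intro power_decreasing) auto
  finally show ?thesis
    using overlap_term_le_mu_ratio[OF i(3)] mult_left_mono[OF _ mu_nonneg] by (meson order_trans)
qed

lemma overlap_term_le_medium_overlap: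
  assumes i: "50 \<le> i" "real i \<le> 1.9 * log b (real n)" "i \<le> a"
    and small: "2 * A\<^sup>2 * real n powr (-0.05) \<le> 1"
  shows "overlap_term n a p i \<le> mu n a p * (2 * A\<^sup>2 * real n powr (-0.05)) ^ 50"
proof -
  have "b powr ((real i - 1) / 2) \<le> b powr (0.95 * log b (real n))"
    using b_gt_1 i by (intro powr_mono) auto
  also have "\<dots> = real n powr 0.95"
    using b_gt_1 n by (intro powr_mult_log) auto
  finally have "2 * A\<^sup>2 * b powr ((real i - 1) / 2) / real n \<le> 2 * A\<^sup>2 * real n powr 0.95 / real n"
    by (intro divide_right_mono mult_left_mono) auto
  also have "\<dots> = 2 * A\<^sup>2 * real n powr (-0.05)"
    using n powr_diff[of "real n" "0.95" 1] by simp
  finally have "(2 * A\<^sup>2 * b powr ((real i - 1) / 2) / real n) ^ i \<le> (2 * A\<^sup>2 * real n powr (-0.05)) ^ i"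
    by (intro power_mono) auto
  also have "\<dots> \<le> (2 * A\<^sup>2 * real n powr (-0.05)) ^ 50"
    using i small by (intro power_decreasing) auto
  finally show ?thesis
    using overlap_term_le_mu_ratio[OF i(3)] mult_left_mono[OF _ mu_nonneg] by (meson order_trans)
qed

lemma overlap_term_le_large_overlap:
  assumes i: "1.9 * log b (real n) \<le> real i" "i < a"
    and a_lower: "1.01 * log b (real n) \<le> real a" and log_n: "10 \<le> log b (real n)"
    and small: "A * real n powr (-0.4) \<le> 1"
  shows "overlap_term n a p i \<le> A * real n powr (-0.4)"
proof -
  define y where "y = real a * real n * b powr (- (real a + real i - 1) / 2)"
  have "b powr (- (real a + real i - 1) / 2) \<le> b powr (- 1.4 * log b (real n))"
    using b_gt_1 i a_lower log_n by (intro powr_mono) auto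
  also have "\<dots> = real n powr (- 1.4)"
    using b_gt_1 n by (intro powr_mult_log) auto
  finally have "y \<le> real a * (real n * real n powr (- 1.4))"
    unfolding y_def mult.assoc by (intro mult_left_mono) auto
  also have "real n * real n powr (- 1.4) = real n powr (- 0.4)"
    by (simp add: powr_mult_base)
  finally have "y \<le> A * real n powr (- 0.4)"
    using a_le_A by (meson mult_right_mono order_trans powr_ge_zero)
  moreover have "overlap_term n a p i \<le> y ^ (a - i)"
    unfolding y_def using p b i by (intro overlap_term_le_pow) auto
  moreover have "y ^ (a - i) \<le> y ^ 1"
    using i \<open>y \<le> A * real n powr (- 0.4)\<close> small by (intro power_decreasing) (auto simp: y_def)
  ultimately show ?thesis
    by simp
qed

lemma overlap_term_le_bounds:
  assumes i: "i \<in> {2..<a}"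
    and a_lower: "1.01 * log b (real n) \<le> real a" and log_n: "10 \<le> log b (real n)"
    and small: "2 * A\<^sup>2 * b ^ 25 / real n \<le> 1" "2 * A\<^sup>2 * real n powr (-0.05) \<le> 1"
      "A * real n powr (-0.4) \<le> 1"
  shows "overlap_term n a p i \<le> mu n a p * (2 * A\<^sup>2 * b ^ 25 / real n)\<^sup>2
    + mu n a p * (2 * A\<^sup>2 * real n powr (-0.05)) ^ 50 + A * real n powr (-0.4)"
proof -
  have nonneg: "0 \<le> mu n a p * (2 * A\<^sup>2 * b ^ 25 / real n)\<^sup>2"
    "0 \<le> mu n a p * (2 * A\<^sup>2 * real n powr (-0.05)) ^ 50" "0 \<le> A * real n powr (-0.4)"
    using mu_nonneg a_le_A by auto
  consider "1.9 * log b (real n) \<le> real i" | "i \<le> 50" | "50 \<le> i" "real i \<le> 1.9 * log b (real n)"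
    by linarith
  then show ?thesis
  proof cases
    case 1
    with overlap_term_le_large_overlap[OF 1 _ a_lower log_n small(3)] i nonneg show ?thesis
      by auto
  next
    case 2
    with overlap_term_le_small_overlap[OF _ 2 _ small(1)] i nonneg show ?thesis
      by auto
  next
    case 3
    with overlap_term_le_medium_overlap[OF 3 _ small(2)] i nonneg show ?thesis
      by auto
  qed
qed

lemma sum_overlap_terms_le:
  assumes a_lower: "1.01 * log b (real n) \<le> real a" and log_n: "10 \<le> log b (real n)"
    and mu_le: "mu n a p \<le> M"
    and small: "2 * A\<^sup>2 * b ^ 25 / real n \<le> 1" "2 * A\<^sup>2 * real n powr (-0.05) \<le> 1"
      "A * real n powr (-0.4) \<le> 1"
  shows "(\<Sum>i\<in>{2..<a}. overlap_term n a p i) \<le>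
    A * (M * (2 * A\<^sup>2 * b ^ 25 / real n)\<^sup>2 + M * (2 * A\<^sup>2 * real n powr (-0.05)) ^ 50
      + A * real n powr (-0.4))"
proof -
  define T where "T = mu n a p * (2 * A\<^sup>2 * b ^ 25 / real n)\<^sup>2
    + mu n a p * (2 * A\<^sup>2 * real n powr (-0.05)) ^ 50 + A * real n powr (-0.4)"
  have "0 \<le> A" "0 \<le> T"
    using a_le_A mu_nonneg by (auto simp: T_def)
  have "(\<Sum>i\<in>{2..<a}. overlap_term n a p i) \<le> real (card {2..<a}) * T"
    unfolding T_def using overlap_term_le_bounds[OF _ a_lower log_n small] by (rule sum_bounded_above)
  also have "\<dots> \<le> A * T"
    using a_le_A \<open>0 \<le> T\<close> by (intro mult_right_mono) auto
  also have "\<dots> \<le> A * (M * (2 * A\<^sup>2 * b ^ 25 / real n)\<^sup>2 + M * (2 * A\<^sup>2 * real n powr (-0.05)) ^ 50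
      + A * real n powr (-0.4))"
    unfolding T_def using mu_le \<open>0 \<le> A\<close> by (intro mult_left_mono add_mono mult_right_mono) auto
  finally show ?thesis .
qed

end

lemma overlap_sum_tendsto_0:
  fixes p :: real and a :: "nat \<Rightarrow> nat"
  assumes p: "0 < p" "p < 1"
  assumes a_bounds: "\<forall>\<^sub>F n in sequentially.
      1.01 * log (1 / (1 - p)) (real n) \<le> real (a n) \<and> real (a n) \<le> 100 * log (1 / (1 - p)) (real n)"
  assumes mu_bound: "\<forall>\<^sub>F n in sequentially. mu n (a n) p \<le> real n powr 1.99"
  shows "(\<lambda>n. \<Sum>i\<in>{2..<a n}. overlap_term n (a n) p i) \<longlonglongrightarrow> 0"
proof (rule tendsto_sandwich[OF _ _ tendsto_const])
  define b where "b = 1 / (1 - p)"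
  have "1 < b"
    using p by (simp add: b_def)
  define A where "A n = 100 * log b (real n)" for n :: nat
  define \<eta> where "\<eta> n = A n * (real n powr 1.99 * (2 * (A n)\<^sup>2 * b ^ 25 / real n)\<^sup>2
      + real n powr 1.99 * (2 * (A n)\<^sup>2 * real n powr (-0.05)) ^ 50 + A n * real n powr (-0.4))" for n
  show "\<eta> \<longlonglongrightarrow> 0"
    unfolding \<eta>_def A_def using \<open>1 < b\<close> by (real_asymp simp: log_def)
  have "\<forall>\<^sub>F n in sequentially. 1 \<le> n \<and> A n \<le> real n / 2 \<and> 10 \<le> log b (real n) \<and>
      2 * (A n)\<^sup>2 * b ^ 25 / real n \<le> 1 \<and> 2 * (A n)\<^sup>2 * real n powr (-0.05) \<le> 1 \<and>
      A n * real n powr (-0.4) \<le> 1"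
    unfolding A_def using \<open>1 < b\<close> by (intro eventually_conj; real_asymp simp: log_def)
  with a_bounds mu_bound
  show "\<forall>\<^sub>F n in sequentially. (\<Sum>i\<in>{2..<a n}. overlap_term n (a n) p i) \<le> \<eta> n"
  proof eventually_elim
    case (elim n)
    then show ?case
      unfolding \<eta>_def using p b_def
      by (intro sum_overlap_terms_le[where A = "A n"]) (auto simp: A_def)
  qed
  show "\<forall>\<^sub>F n in sequentially. 0 \<le> (\<Sum>i\<in>{2..<a n}. overlap_term n (a n) p i)"
    using p by (intro always_eventually allI sum_nonneg) (simp add: overlap_term_def)
qed

theorem lemma20:
  fixes p :: real and a :: "nat \<Rightarrow> nat"
  assumes p: "0 < p" "p < 1"
  assumes a_bounds: "\<forall>\<^sub>F n in sequentially.
      1.01 * log (1 / (1 - p)) (real n) \<le> real (a n) \<and>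
      real (a n) \<le> 100 * log (1 / (1 - p)) (real n)"
  assumes mu_bound: "\<forall>\<^sub>F n in sequentially.
      real (n choose a n) * (1 - p) ^ (a n choose 2) \<le> real n powr 1.99"
  shows "\<exists>\<epsilon> :: nat \<Rightarrow> real. \<epsilon> \<longlonglongrightarrow> 0 \<and>
    (\<forall>\<^sub>F n in sequentially. \<exists>q. is_coupling q (gnp n p) (gnp (n - a n) p) \<and>
       measure_pmf.prob q
         {(G, H). chromatic_number n G \<le> chromatic_number (n - a n) H + 1}
       \<ge> 1 - (1 + \<epsilon> n) /
             (2 * sqrt (real (n choose a n) * (1 - p) ^ (a n choose 2))))"
proof (intro exI conjI)
  define \<epsilon> where "\<epsilon> n = sqrt (1 + (\<Sum>i\<in>{2..<a n}. overlap_term n (a n) p i)) - 1" for n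
  have "\<epsilon> \<longlonglongrightarrow> sqrt (1 + 0) - 1"
    unfolding \<epsilon>_def using overlap_sum_tendsto_0[OF p a_bounds] mu_bound
    by (intro tendsto_intros) (simp_all add: mu_def)
  then show "\<epsilon> \<longlonglongrightarrow> 0"
    by simp
  define b where "b = 1 / (1 - p)"
  have "1 < b"
    using p by (simp add: b_def)
  then have "\<forall>\<^sub>F n in sequentially. 100 * log b (real n) \<le> real n"
    by (real_asymp simp: log_def)
  with a_bounds have "\<forall>\<^sub>F n in sequentially. a n \<le> n"
    unfolding b_def by eventually_elim linarith
  then show "\<forall>\<^sub>F n in sequentially. \<exists>q. is_coupling q (gnp n p) (gnp (n - a n) p) \<and>
      1 - (1 + \<epsilon> n) / (2 * sqrt (real (n choose a n) * (1 - p) ^ (a n choose 2)))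
        \<le> measure_pmf.prob q {(G, H). chromatic_number n G \<le> chromatic_number (n - a n) H + 1}"
    by eventually_elim (use exists_chromatic_coupling[OF p] in \<open>simp add: \<epsilon>_def mu_def\<close>)
qed

end
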